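(* Let $S$ be a $\Gamma$-AG$^{**}$-groupoid. Then $S$ is intra-regular if and only if $A=(S\Gamma A)\Gamma(S\Gamma A)$ for every left $\Gamma$-ideal $A$ of $S$.
   Context: Let $S$ and $\Gamma$ be nonempty sets with a map $S\times\Gamma\times S\to S$, $(x,\gamma,y)\mapsto x\gamma y$. $S$ is a $\Gamma$-AG-groupoid if $(x\gamma y)\delta z=(z\gamma y)\delta x$ for all $x,y,z\in S$, $\gamma,\delta\in\Gamma$; it is a $\Gamma$-AG$^{**}$-groupoid if moreover $a\alpha(b\beta c)=b\alpha(a\beta c)$ for all $a,b,c\in S$, $\alpha,\beta\in\Gamma$. For subsets $A,B\subseteq S$, $A\Gamma B=\{a\gamma b: a\in A,\gamma\in\Gamma,b\in B\}$. $S$ is intra-regular if for every $a\in S$ there exist $x,y\in S$ and $\beta,\gamma,\delta\in\Gamma$ with $a=(x\beta(a\delta a))\gamma y$. A nonempty subset $A$ is a left $\Gamma$-ideal if $S\Gamma A\subseteq A$. *)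

theory Defs
  imports Main
begin

definition gamma_closed :: "'s set \<Rightarrow> 'g set \<Rightarrow> ('s \<Rightarrow> 'g \<Rightarrow> 's \<Rightarrow> 's) \<Rightarrow> bool" where
  "gamma_closed S G m \<longleftrightarrow> S \<noteq> {} \<and> G \<noteq> {} \<and>
     (\<forall>x\<in>S. \<forall>g\<in>G. \<forall>y\<in>S. m x g y \<in> S)"

definition gamma_AG_groupoid :: "'s set \<Rightarrow> 'g set \<Rightarrow> ('s \<Rightarrow> 'g \<Rightarrow> 's \<Rightarrow> 's) \<Rightarrow> bool" where
  "gamma_AG_groupoid S G m \<longleftrightarrow> gamma_closed S G m \<and>
     (\<forall>x\<in>S. \<forall>y\<in>S. \<forall>z\<in>S. \<forall>g\<in>G. \<forall>d\<in>G. m (m x g y) d z = m (m z g y) d x)"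

definition gamma_AG2_groupoid :: "'s set \<Rightarrow> 'g set \<Rightarrow> ('s \<Rightarrow> 'g \<Rightarrow> 's \<Rightarrow> 's) \<Rightarrow> bool" where
  "gamma_AG2_groupoid S G m \<longleftrightarrow> gamma_AG_groupoid S G m \<and>
     (\<forall>a\<in>S. \<forall>b\<in>S. \<forall>c\<in>S. \<forall>\<alpha>\<in>G. \<forall>\<beta>\<in>G. m a \<alpha> (m b \<beta> c) = m b \<alpha> (m a \<beta> c))"

definition gprod :: "('s \<Rightarrow> 'g \<Rightarrow> 's \<Rightarrow> 's) \<Rightarrow> 's set \<Rightarrow> 'g set \<Rightarrow> 's set \<Rightarrow> 's set" where
  "gprod m A G B = {m a g b | a g b. a \<in> A \<and> g \<in> G \<and> b \<in> B}"

definition intra_regular :: "'s set \<Rightarrow> 'g set \<Rightarrow> ('s \<Rightarrow> 'g \<Rightarrow> 's \<Rightarrow> 's) \<Rightarrow> bool" where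
  "intra_regular S G m \<longleftrightarrow> (\<forall>a\<in>S. \<exists>x\<in>S. \<exists>y\<in>S. \<exists>\<beta>\<in>G. \<exists>\<gamma>\<in>G. \<exists>\<delta>\<in>G.
      a = m (m x \<beta> (m a \<delta> a)) \<gamma> y)"

definition left_gamma_ideal :: "'s set \<Rightarrow> 'g set \<Rightarrow> ('s \<Rightarrow> 'g \<Rightarrow> 's \<Rightarrow> 's) \<Rightarrow> 's set \<Rightarrow> bool" where
  "left_gamma_ideal S G m A \<longleftrightarrow> A \<noteq> {} \<and> A \<subseteq> S \<and> gprod m S G A \<subseteq> A"

end

theory Submission
  imports Defs
begin

(*
  The inclusion (S Gamma A) Gamma (S Gamma A) <= A holds for every left Gamma-ideal of a
  closed Gamma-structure.  For the converse inclusion, the left invertive law and the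
  AG**-law rewrite an intra-regular witness a = (x b (a d a)) c y into
  a = (x b (y d a)) c (u c a), whose two factors visibly lie in S Gamma A.

  Conversely, applying the hypothesis to the left ideal S gives S <= S Gamma S; this makes
  S Gamma (S Gamma a) <= S Gamma a, so L(a) = {a} u S Gamma a is a left Gamma-ideal.
  Its idempotency writes a = (s b a) c (t d a), and a chain of left invertive and
  AG**-steps turns this into an intra-regular representation of a.
*)

lemma gprodI [intro]: "a \<in> A \<Longrightarrow> g \<in> G \<Longrightarrow> b \<in> B \<Longrightarrow> m a g b \<in> gprod m A G B"
  unfolding gprod_def by blast

lemma gprod_mono: "A \<subseteq> A' \<Longrightarrow> B \<subseteq> B' \<Longrightarrow> gprod m A G B \<subseteq> gprod m A' G B'"
  unfolding gprod_def by blast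

lemma gprodE [elim]:
  assumes "w \<in> gprod m A G B"
  obtains a g b where "w = m a g b" "a \<in> A" "g \<in> G" "b \<in> B"
  using assms unfolding gprod_def by blast

lemma left_ideal_square_subset:
  assumes "gamma_closed S G m" and "left_gamma_ideal S G m A"
  shows "gprod m (gprod m S G A) G (gprod m S G A) \<subseteq> A"
proof
  have AS: "A \<subseteq> S" and SA: "gprod m S G A \<subseteq> A"
    using assms(2) unfolding left_gamma_ideal_def by auto
  fix w assume "w \<in> gprod m (gprod m S G A) G (gprod m S G A)"
  then obtain u g v where w: "w = m u g v" and u: "u \<in> gprod m S G A" and "g \<in> G"
    and "v \<in> gprod m S G A" by blast
  have "u \<in> S" using u AS assms(1) unfolding gamma_closed_def by blast
  with \<open>g \<in> G\<close> \<open>v \<in> gprod m S G A\<close> SA have "w \<in> gprod m S G A" using w by blast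
  with SA show "w \<in> A" by blast
qed

locale gamma_AG2 =
  fixes S :: "'s set" and G :: "'g set" and m :: "'s \<Rightarrow> 'g \<Rightarrow> 's \<Rightarrow> 's"
  assumes AG2: "gamma_AG2_groupoid S G m"
begin

lemma closed_structure: "gamma_closed S G m"
  using AG2 unfolding gamma_AG2_groupoid_def gamma_AG_groupoid_def by blast

lemma closed: "x \<in> S \<Longrightarrow> g \<in> G \<Longrightarrow> y \<in> S \<Longrightarrow> m x g y \<in> S"
  using closed_structure unfolding gamma_closed_def by blast

lemma left_invertive:
  "x \<in> S \<Longrightarrow> y \<in> S \<Longrightarrow> z \<in> S \<Longrightarrow> g \<in> G \<Longrightarrow> d \<in> G \<Longrightarrow>
    m (m x g y) d z = m (m z g y) d x"
  using AG2 unfolding gamma_AG2_groupoid_def gamma_AG_groupoid_def by blast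

lemma AG2_law:
  "a \<in> S \<Longrightarrow> b \<in> S \<Longrightarrow> c \<in> S \<Longrightarrow> \<alpha> \<in> G \<Longrightarrow> \<beta> \<in> G \<Longrightarrow>
    m a \<alpha> (m b \<beta> c) = m b \<alpha> (m a \<beta> c)"
  using AG2 unfolding gamma_AG2_groupoid_def by blast

lemma S_left_ideal: "left_gamma_ideal S G m S"
  using closed_structure unfolding left_gamma_ideal_def gamma_closed_def gprod_def by blast

lemma intra_regular_refactor:
  assumes a: "a \<in> S" and x: "x \<in> S" and y: "y \<in> S"
    and \<beta>: "\<beta> \<in> G" and \<gamma>: "\<gamma> \<in> G" and \<delta>: "\<delta> \<in> G"
    and a_eq: "a = m (m x \<beta> (m a \<delta> a)) \<gamma> y"
  shows "a = m (m x \<beta> (m y \<delta> a)) \<gamma> (m (m y \<beta> (m x \<delta> a)) \<gamma> a)"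
proof -
  define u where "u = m y \<beta> (m x \<delta> a)"
  have "a = m (m a \<beta> (m x \<delta> a)) \<gamma> y"
    using a_eq AG2_law[of x a a \<beta> \<delta>] x a \<beta> \<delta> by simp
  also have "\<dots> = m u \<gamma> a"
    unfolding u_def using left_invertive[of a "m x \<delta> a" y \<beta> \<gamma>] closed x a y \<beta> \<gamma> \<delta> by simp
  finally have a_left: "a = m u \<gamma> a" .
  have u_swap: "u = m x \<beta> (m y \<delta> a)"
    unfolding u_def using AG2_law[of y x a \<beta> \<delta>] x y a \<beta> \<delta> by simp
  from a_left have "a = m u \<gamma> (m u \<gamma> a)" by simp
  with u_swap show ?thesis unfolding u_def by simp
qed

lemma intra_regular_left_ideals_idempotent:
  assumes ir: "intra_regular S G m" and A: "left_gamma_ideal S G m A"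
  shows "A = gprod m (gprod m S G A) G (gprod m S G A)"
proof
  show "gprod m (gprod m S G A) G (gprod m S G A) \<subseteq> A"
    using left_ideal_square_subset[OF closed_structure A] .
next
  have AS: "A \<subseteq> S" and SA: "gprod m S G A \<subseteq> A"
    using A unfolding left_gamma_ideal_def by auto
  show "A \<subseteq> gprod m (gprod m S G A) G (gprod m S G A)"
  proof
    fix a assume aA: "a \<in> A"
    with AS have a: "a \<in> S" by blast
    then obtain x y \<beta> \<gamma> \<delta> where x: "x \<in> S" and y: "y \<in> S" and \<beta>: "\<beta> \<in> G"
      and \<gamma>: "\<gamma> \<in> G" and \<delta>: "\<delta> \<in> G" and "a = m (m x \<beta> (m a \<delta> a)) \<gamma> y"
      using ir unfolding intra_regular_def by blast
    then have a_eq: "a = m (m x \<beta> (m y \<delta> a)) \<gamma> (m (m y \<beta> (m x \<delta> a)) \<gamma> a)"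
      using intra_regular_refactor a by blast
    have "m y \<delta> a \<in> A" using SA y \<delta> aA by blast
    then have "m x \<beta> (m y \<delta> a) \<in> gprod m S G A" using x \<beta> by blast
    moreover have "m (m y \<beta> (m x \<delta> a)) \<gamma> a \<in> gprod m S G A"
      using closed x y a \<beta> \<gamma> \<delta> aA by blast
    ultimately show "a \<in> gprod m (gprod m S G A) G (gprod m S G A)"
      using a_eq \<gamma> by (metis gprodI)
  qed
qed

lemma double_left_mult_absorb:
  assumes SS: "S \<subseteq> gprod m S G S"
    and a: "a \<in> S" and s: "s \<in> S" and t: "t \<in> S" and g: "g \<in> G" and h: "h \<in> G"
  shows "m s g (m t h a) \<in> gprod m S G {a}"
proof -
  from t SS obtain p \<zeta> q where p: "p \<in> S" and \<zeta>: "\<zeta> \<in> G" and q: "q \<in> S"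
    and t_eq: "t = m p \<zeta> q" by blast
  have "m s g (m t h a) = m s g (m (m a \<zeta> q) h p)"
    using t_eq left_invertive[of p q a \<zeta> h] p q a \<zeta> h by simp
  also have "\<dots> = m (m a \<zeta> q) g (m s h p)"
    using AG2_law[of s "m a \<zeta> q" p g h] closed s p q a \<zeta> g h by simp
  also have "\<dots> = m (m (m s h p) \<zeta> q) g a"
    using left_invertive[of a q "m s h p" \<zeta> g] closed s p q a \<zeta> g h by simp
  finally show ?thesis using closed s p q \<zeta> g h by auto
qed

definition principal_left_ideal :: "'s \<Rightarrow> 's set" where
  "principal_left_ideal a = insert a (gprod m S G {a})"

lemma left_mult_principal_left_ideal:
  assumes "S \<subseteq> gprod m S G S" and "a \<in> S"
  shows "gprod m S G (principal_left_ideal a) \<subseteq> gprod m S G {a}"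
  using double_left_mult_absorb[OF assms]
  unfolding principal_left_ideal_def by (auto elim!: gprodE)

lemma principal_left_ideal_is_left_ideal:
  assumes "S \<subseteq> gprod m S G S" and a: "a \<in> S"
  shows "left_gamma_ideal S G m (principal_left_ideal a)"
  unfolding left_gamma_ideal_def
proof (intro conjI)
  show "principal_left_ideal a \<noteq> {}" unfolding principal_left_ideal_def by blast
  show "principal_left_ideal a \<subseteq> S"
    unfolding principal_left_ideal_def using a closed by (auto elim!: gprodE)
  show "gprod m S G (principal_left_ideal a) \<subseteq> principal_left_ideal a"
    using left_mult_principal_left_ideal[OF assms] unfolding principal_left_ideal_def by blast
qed

lemma intra_regular_of_square:
  assumes a: "a \<in> S" and s: "s \<in> S" and t: "t \<in> S"
    and \<beta>: "\<beta> \<in> G" and \<gamma>: "\<gamma> \<in> G" and \<delta>: "\<delta> \<in> G"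
    and a_eq: "a = m (m s \<beta> a) \<gamma> (m t \<delta> a)"
  shows "a = m (m a \<gamma> (m a \<delta> a)) \<gamma> (m (m s \<beta> t) \<delta> (m s \<beta> t))"
proof -
  define u where "u = m s \<beta> t"
  have u: "u \<in> S" unfolding u_def using closed s t \<beta> by blast
  have "a = m (m (m t \<delta> a) \<beta> a) \<gamma> s"
    using a_eq left_invertive[of s a "m t \<delta> a" \<beta> \<gamma>] closed s t a \<beta> \<gamma> \<delta> by simp
  also have "\<dots> = m (m (m a \<delta> a) \<beta> t) \<gamma> s"
    using left_invertive[of t a a \<delta> \<beta>] t a \<beta> \<delta> by simp
  also have "\<dots> = m u \<gamma> (m a \<delta> a)"
    unfolding u_def using left_invertive[of "m a \<delta> a" t s \<beta> \<gamma>] closed s t a \<beta> \<gamma> \<delta> by simp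
  finally have a_u: "a = m u \<gamma> (m a \<delta> a)" .
  then have "m a \<delta> a = m (m a \<gamma> (m a \<delta> a)) \<delta> u"
    using left_invertive[of u "m a \<delta> a" a \<gamma> \<delta>] closed u a \<gamma> \<delta> by simp
  with a_u have "a = m u \<gamma> (m (m a \<gamma> (m a \<delta> a)) \<delta> u)" by simp
  also have "\<dots> = m (m a \<gamma> (m a \<delta> a)) \<gamma> (m u \<delta> u)"
    using AG2_law[of u "m a \<gamma> (m a \<delta> a)" u \<gamma> \<delta>] closed u a \<gamma> \<delta> by simp
  finally show ?thesis unfolding u_def .
qed

lemma intra_regular_if_left_ideals_idempotent:
  assumes H: "\<forall>A. left_gamma_ideal S G m A \<longrightarrow>
                  A = gprod m (gprod m S G A) G (gprod m S G A)"
  shows "intra_regular S G m"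
  unfolding intra_regular_def
proof
  fix a assume a: "a \<in> S"
  have "S = gprod m (gprod m S G S) G (gprod m S G S)" using H S_left_ideal by blast
  moreover have "gprod m S G S \<subseteq> S" using closed by (auto elim!: gprodE)
  ultimately have SS: "S \<subseteq> gprod m S G S" using gprod_mono by (metis subset_refl)
  let ?L = "principal_left_ideal a"
  have "a \<in> gprod m (gprod m S G ?L) G (gprod m S G ?L)"
    using H principal_left_ideal_is_left_ideal[OF SS a] unfolding principal_left_ideal_def by blast
  then have "a \<in> gprod m (gprod m S G {a}) G (gprod m S G {a})"
    using left_mult_principal_left_ideal[OF SS a] by (blast elim!: gprodE)
  then obtain s \<beta> t \<gamma> \<delta> where s: "s \<in> S" and t: "t \<in> S" and \<beta>: "\<beta> \<in> G" and \<gamma>: "\<gamma> \<in> G"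
    and \<delta>: "\<delta> \<in> G" and "a = m (m s \<beta> a) \<gamma> (m t \<delta> a)" by (auto elim!: gprodE)
  then have "a = m (m a \<gamma> (m a \<delta> a)) \<gamma> (m (m s \<beta> t) \<delta> (m s \<beta> t))"
    using intra_regular_of_square a by blast
  moreover have "m (m s \<beta> t) \<delta> (m s \<beta> t) \<in> S" using closed s t \<beta> \<delta> by blast
  ultimately show "\<exists>x\<in>S. \<exists>y\<in>S. \<exists>\<beta>\<in>G. \<exists>\<gamma>\<in>G. \<exists>\<delta>\<in>G. a = m (m x \<beta> (m a \<delta> a)) \<gamma> y"
    using a \<gamma> \<delta> by blast
qed

end

theorem mainTheorem13:
  fixes S :: "'s set" and G :: "'g set" and m :: "'s \<Rightarrow> 'g \<Rightarrow> 's \<Rightarrow> 's"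
  assumes "gamma_AG2_groupoid S G m"
  shows "intra_regular S G m \<longleftrightarrow>
    (\<forall>A. left_gamma_ideal S G m A \<longrightarrow>
       A = gprod m (gprod m S G A) G (gprod m S G A))"
proof -
  interpret gamma_AG2 S G m using assms by unfold_locales
  show ?thesis
    using intra_regular_left_ideals_idempotent intra_regular_if_left_ideals_idempotent
    by blast
qed

end
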